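(* For each $k\in\mathbb N$, the ordinal $\omega^{\omega^k}$ (as the linear ordering $(\omega^{\omega^k};\le)$) admits a tree-automatic presentation over a unary alphabet $\Sigma$, i.e. with all universe trees being $\Sigma$-trees for some one-letter alphabet $\Sigma$.
   Context: A $\Sigma$-tree is a map $t:D\to\Sigma$ where $D$ is a finite prefix-closed subset of $\{0,1\}^*$. A tree automaton is deterministic bottom-up: $(Q,\iota,\delta:\Sigma\times Q\times Q\to Q,F)$, with missing children assigned state $\iota$ and acceptance determined by the root state. The convolution of trees $t_1,\dots,t_n$ is the tree on $\bigcup_i\mathrm{dom}(t_i)$ labelled by tuples, padding with a fresh symbol $\Box$ where a $t_i$ is undefined. A tree-automatic presentation of a structure $(A;\le)$ consists of tree automata $\mathcal A$, $\mathcal A_\le$ and a bijection $\mu:A\to L(\mathcal A)$ such that $\mathcal A_\le$ accepts exactly the convolutions $\otimes(\mu(a),\mu(b))$ with $a\le b$. *)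

theory Defs
  imports Main
begin

text \<open>A Sigma-tree t : D -> Sigma with D a finite prefix-closed subset of {0,1}^*
  is represented as a partial map from bool lists (False = 0, True = 1) to labels;
  D = dom t.\<close>

type_synonym 'a tree = "bool list \<Rightarrow> 'a option"

definition is_tree :: "'a tree \<Rightarrow> bool" where
  "is_tree t \<longleftrightarrow> finite (dom t) \<and> (\<forall>u v. u @ v \<in> dom t \<longrightarrow> u \<in> dom t)"

text \<open>Convolution of two trees; the padding symbol Box is represented by None.\<close>

definition conv :: "'a tree \<Rightarrow> 'b tree \<Rightarrow> ('a option \<times> 'b option) tree" where
  "conv t1 t2 u = (if u \<in> dom t1 \<union> dom t2 then Some (t1 u, t2 u) else None)"

datatype ('s, 'q) ta =
  TA (states: "'q set") (init: 'q) (delta: "'s \<Rightarrow> 'q \<Rightarrow> 'q \<Rightarrow> 'q") (final: "'q set")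

definition wf_ta :: "('s, 'q) ta \<Rightarrow> bool" where
  "wf_ta A \<longleftrightarrow> finite (states A) \<and> init A \<in> states A \<and> final A \<subseteq> states A \<and>
     (\<forall>a. \<forall>p\<in>states A. \<forall>q\<in>states A. delta A a p q \<in> states A)"

definition is_run :: "('s, 'q) ta \<Rightarrow> 's tree \<Rightarrow> (bool list \<Rightarrow> 'q) \<Rightarrow> bool" where
  "is_run A t \<rho> \<longleftrightarrow>
     (\<forall>u. u \<notin> dom t \<longrightarrow> \<rho> u = init A) \<and>
     (\<forall>u a. t u = Some a \<longrightarrow> \<rho> u = delta A a (\<rho> (u @ [False])) (\<rho> (u @ [True])))"

definition accepts :: "('s, 'q) ta \<Rightarrow> 's tree \<Rightarrow> bool" where
  "accepts A t \<longleftrightarrow> (\<exists>\<rho>. is_run A t \<rho> \<and> \<rho> [] \<in> final A)"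

definition lang :: "('s, 'q) ta \<Rightarrow> 's tree set" where
  "lang A = {t. is_tree t \<and> accepts A t}"

text \<open>A linear order is given as a relation le (a set of pairs) with carrier Field le.\<close>

definition tree_automatic_presentation ::
  "('e \<times> 'e) set \<Rightarrow> ('s, 'q) ta \<Rightarrow> ('s option \<times> 's option, 'q) ta \<Rightarrow> ('e \<Rightarrow> 's tree) \<Rightarrow> bool" where
  "tree_automatic_presentation le A Ale \<mu> \<longleftrightarrow>
     wf_ta A \<and> wf_ta Ale \<and>
     bij_betw \<mu> (Field le) (lang A) \<and>
     lang Ale = {conv (\<mu> a) (\<mu> b) | a b. (a, b) \<in> le}"

text \<open>Ordinal exponentiation with base omega (as in the standard construction,
  cf. oexp in HOL-Cardinals): omega^r is the set of finitely supported functions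
  Field r -> nat, ordered by comparing values at the r-largest point of difference.\<close>

definition fin_supp :: "'a set \<Rightarrow> ('a \<Rightarrow> nat) \<Rightarrow> bool" where
  "fin_supp X f \<longleftrightarrow> (\<forall>x. x \<notin> X \<longrightarrow> f x = 0) \<and> finite {x. f x \<noteq> 0}"

definition omega_exp :: "('a \<times> 'a) set \<Rightarrow> (('a \<Rightarrow> nat) \<times> ('a \<Rightarrow> nat)) set" where
  "omega_exp r = {(f, g). fin_supp (Field r) f \<and> fin_supp (Field r) g \<and>
      (f = g \<or> (\<exists>a\<in>Field r. f a < g a \<and>
                  (\<forall>b\<in>Field r. (a, b) \<in> r \<and> b \<noteq> a \<longrightarrow> f b = g b)))}"

definition fin_ord :: "nat \<Rightarrow> (nat \<times> nat) set" where
  "fin_ord k = {(i, j). i \<le> j \<and> j < k}"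

definition omega_omega_pow :: "nat \<Rightarrow> (((nat \<Rightarrow> nat) \<Rightarrow> nat) \<times> ((nat \<Rightarrow> nat) \<Rightarrow> nat)) set" where
  "omega_omega_pow k = omega_exp (omega_exp (fin_ord k))"

end

theory Submission
  imports Defs "HOL-Library.Sublist" "HOL-Library.List_Lexorder" "HOL-Library.Comparator"
begin

text \<open>
  An ordinal below omega^(omega^k) is, in Cantor normal form, a finitely supported coefficient
  function H on k-tuples of natural numbers, compared at the lexicographically largest tuple
  where two functions differ.  We code H by the unary tree formed by the paths
  1^x1 0 1^x2 0 ... 1^xk 0 0^(H xs - 1) for all tuples xs with H xs > 0 (1 = right, 0 = left).

  It then shows that the codes of level d are
  characterised recursively by their two subtrees (the left subtree codes the tuples starting
  with 0, the right subtree the others with decreased first coordinate), and that the order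
  of two codes is the lexicographic comparison of their right and then their left subtrees.
  Both facts are local, so the codes of level k are recognised by an automaton computing a
  "profile" of each subtree, and the order by a product of two such automata (one per track of
  the convolution) with a three-valued comparison automaton.
\<close>


text \<open>A strict upper bound on the length of the nodes of a finite tree; it provides the
  termination measure for recursion and induction from the leaves to the root.\<close>

definition height_bound :: "'a tree \<Rightarrow> nat" where
  "height_bound t = Suc (Max (length ` dom t))"

lemma length_lt_height_bound: "is_tree t \<Longrightarrow> u \<in> dom t \<Longrightarrow> length u < height_bound t"
  unfolding height_bound_def is_tree_def by (simp add: le_imp_less_Suc)

lemma tree_node_induct [consumes 1, case_names outside node]:
  assumes "is_tree t"
    and outside: "\<And>u. u \<notin> dom t \<Longrightarrow> P u"
    and node: "\<And>u. u \<in> dom t \<Longrightarrow> P (u @ [False]) \<Longrightarrow> P (u @ [True]) \<Longrightarrow> P u"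
  shows "P u"
proof (induction u rule: measure_induct_rule[where f = "\<lambda>u. height_bound t - length u"])
  case (less u)
  show ?case
  proof (cases "u \<in> dom t")
    case True
    with assms(1) have "length u < height_bound t" by (rule length_lt_height_bound)
    then show ?thesis using node[OF True] less by simp
  qed (rule outside)
qed

function run_of :: "('s, 'q) ta \<Rightarrow> 's tree \<Rightarrow> bool list \<Rightarrow> 'q" where
  "run_of A t u = (if u \<in> dom t \<and> length u < height_bound t
     then delta A (the (t u)) (run_of A t (u @ [False])) (run_of A t (u @ [True])) else init A)"
  by pat_completeness auto
termination by (relation "measure (\<lambda>(A, t, u). height_bound t - length u)") auto

declare run_of.simps [simp del]

lemma run_exists:
  assumes "is_tree t" shows "is_run A t (run_of A t)"
proof -
  have "run_of A t u = delta A a (run_of A t (u @ [False])) (run_of A t (u @ [True]))"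
    if "t u = Some a" for u a
    using that length_lt_height_bound[OF assms, of u] by (subst run_of.simps) auto
  moreover have "run_of A t u = init A" if "u \<notin> dom t" for u
    using that by (subst run_of.simps) auto
  ultimately show ?thesis unfolding is_run_def by blast
qed

lemma run_unique:
  assumes "is_tree t" "is_run A t \<rho>" "is_run A t \<rho>'"
  shows "\<rho> u = \<rho>' u"
  using assms(1)
proof (induction u rule: tree_node_induct)
  case (outside u) then show ?case using assms(2,3) by (simp add: is_run_def)
next
  case (node u) then show ?case using assms(2,3) by (auto simp: is_run_def)
qed

lemma accepts_iff_run:
  "is_tree t \<Longrightarrow> is_run A t \<rho> \<Longrightarrow> accepts A t \<longleftrightarrow> \<rho> [] \<in> final A"
  unfolding accepts_def using run_unique by metis

lemma run_in_states:
  assumes "wf_ta A" "is_tree t" "is_run A t \<rho>"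
  shows "\<rho> u \<in> states A"
  using assms(2)
proof (induction u rule: tree_node_induct)
  case (outside u) then show ?case using assms(1,3) by (simp add: is_run_def wf_ta_def)
next
  case (node u) then show ?case using assms(1,3) by (auto simp: is_run_def wf_ta_def)
qed

text \<open>Transporting an automaton along an injective renaming of its states; this is how the
  automata below, whose states are structured objects, are turned into automata with
  natural-number states as the statement requires.\<close>

definition rename_states :: "('q \<Rightarrow> 'p) \<Rightarrow> ('s, 'q) ta \<Rightarrow> ('s, 'p) ta" where
  "rename_states f A = TA (f ` states A) (f (init A))
     (\<lambda>a p q. f (delta A a (inv_into (states A) f p) (inv_into (states A) f q))) (f ` final A)"

lemma wf_rename_states:
  assumes "wf_ta A" shows "wf_ta (rename_states f A)"
proof -
  have "inv_into (states A) f p \<in> states A" if "p \<in> f ` states A" for p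
    using that by (rule inv_into_into)
  then show ?thesis using assms unfolding wf_ta_def rename_states_def by auto
qed

lemma is_run_rename_states:
  assumes "wf_ta A" "inj_on f (states A)" "is_tree t" "is_run A t \<rho>"
  shows "is_run (rename_states f A) t (f \<circ> \<rho>)"
proof -
  have "inv_into (states A) f (f (\<rho> u)) = \<rho> u" for u
    using assms run_in_states by (metis inv_into_f_f)
  then show ?thesis using assms(4) unfolding is_run_def rename_states_def by auto
qed

lemma lang_rename_states:
  assumes "wf_ta A" "inj_on f (states A)"
  shows "lang (rename_states f A) = lang A"
proof -
  have "accepts (rename_states f A) t \<longleftrightarrow> accepts A t" if t: "is_tree t" for t
  proof -
    have \<rho>: "is_run A t (run_of A t)" using t by (rule run_exists)
    have "run_of A t [] \<in> states A" "final A \<subseteq> states A"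
      using run_in_states[OF assms(1) t \<rho>] assms(1) by (auto simp: wf_ta_def)
    then have "f (run_of A t []) \<in> f ` final A \<longleftrightarrow> run_of A t [] \<in> final A"
      using assms(2) by (meson inj_on_image_mem_iff)
    then show ?thesis
      using accepts_iff_run[OF t \<rho>] accepts_iff_run[OF t is_run_rename_states[OF assms t \<rho>]]
      by (simp add: rename_states_def)
  qed
  then show ?thesis unfolding lang_def by auto
qed

lemma nat_states_ta:
  assumes "wf_ta (A :: ('s, 'q) ta)"
  shows "\<exists>B :: ('s, nat) ta. wf_ta B \<and> lang B = lang A"
proof -
  obtain f :: "'q \<Rightarrow> nat" where "inj_on f (states A)"
    using assms finite_imp_inj_to_nat_seg unfolding wf_ta_def by metis
  then show ?thesis using assms wf_rename_states lang_rename_states by blast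
qed

definition relabel :: "('s \<Rightarrow> 'r) \<Rightarrow> ('r, 'q) ta \<Rightarrow> ('s, 'q) ta" where
  "relabel g A = TA (states A) (init A) (\<lambda>a. delta A (g a)) (final A)"

lemma is_run_relabel: "is_run (relabel g A) t \<rho> \<longleftrightarrow> is_run A (map_option g \<circ> t) \<rho>"
  unfolding is_run_def relabel_def by (auto simp: domIff)

lemma wf_relabel: "wf_ta A \<Longrightarrow> wf_ta (relabel g A)"
  by (simp add: wf_ta_def relabel_def)

definition prod_ta :: "('s, 'p) ta \<Rightarrow> ('s, 'q) ta \<Rightarrow> ('p \<times> 'q) set \<Rightarrow> ('s, 'p \<times> 'q) ta" where
  "prod_ta A B F = TA (states A \<times> states B) (init A, init B)
     (\<lambda>a p q. (delta A a (fst p) (fst q), delta B a (snd p) (snd q))) F"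

lemma wf_prod_ta: "wf_ta A \<Longrightarrow> wf_ta B \<Longrightarrow> F \<subseteq> states A \<times> states B \<Longrightarrow> wf_ta (prod_ta A B F)"
  unfolding wf_ta_def prod_ta_def by auto

lemma is_run_prod_ta:
  "is_run A t \<rho>\<^sub>1 \<Longrightarrow> is_run B t \<rho>\<^sub>2 \<Longrightarrow> is_run (prod_ta A B F) t (\<lambda>u. (\<rho>\<^sub>1 u, \<rho>\<^sub>2 u))"
  unfolding is_run_def prod_ta_def by simp

text \<open>A tree over a one-letter alphabet is determined by its set of nodes.  The residual of a
  node set at u is the set of nodes of the subtree rooted at u.\<close>

definition unit_tree :: "bool list set \<Rightarrow> unit tree" where
  "unit_tree S u = (if u \<in> S then Some () else None)"

definition residual :: "bool list set \<Rightarrow> bool list \<Rightarrow> bool list set" where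
  "residual S u = {v. u @ v \<in> S}"

lemma dom_unit_tree [simp]: "dom (unit_tree S) = S"
  by (auto simp: unit_tree_def split: if_splits)

lemma unit_tree_dom: "unit_tree (dom t) = t"
proof
  fix u show "unit_tree (dom t) u = t u" by (cases "t u") (auto simp: unit_tree_def)
qed

lemma inj_unit_tree: "inj unit_tree"
  by (metis dom_unit_tree injI)

lemma residual_Nil [simp]: "residual S [] = S"
  by (simp add: residual_def)

lemma residual_residual [simp]: "residual (residual S u) v = residual S (u @ v)"
  by (simp add: residual_def)

lemma Nil_in_residual [simp]: "[] \<in> residual S u \<longleftrightarrow> u \<in> S"
  by (simp add: residual_def)

lemma residual_outside_tree: "is_tree t \<Longrightarrow> u \<notin> dom t \<Longrightarrow> residual (dom t) u = {}"
  unfolding is_tree_def residual_def by blast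

lemma set_eq_by_residuals:
  assumes "[] \<in> S" "[] \<in> T" "\<And>b. residual S [b] = residual T [b]"
  shows "S = T"
proof -
  have "w \<in> S \<longleftrightarrow> w \<in> T" for w
    using assms by (cases w) (auto simp: residual_def set_eq_iff)
  then show ?thesis by blast
qed

lemma empty_iff_residuals_empty:
  "[] \<notin> S \<Longrightarrow> S = {} \<longleftrightarrow> residual S [False] = {} \<and> residual S [True] = {}"
proof
  assume "[] \<notin> S" and empty: "residual S [False] = {} \<and> residual S [True] = {}"
  have "w \<notin> S" for w
    using \<open>[] \<notin> S\<close> empty by (cases w; cases "hd w") (auto simp: residual_def)
  then show "S = {}" by blast
qed (auto simp: residual_def)

section \<open>Coding Cantor normal forms by unary trees\<close>

definition coord_path :: "nat list \<Rightarrow> bool list" where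
  "coord_path xs = concat (map (\<lambda>n. replicate n True @ [False]) xs)"

lemma coord_path_simps [simp]:
  "coord_path [] = []"
  "coord_path (x # xs) = replicate x True @ False # coord_path xs"
  by (simp_all add: coord_path_def)

text \<open>An ordinal below omega^(omega^d) in Cantor normal form is a finitely supported
  coefficient function on d-tuples (ordered lexicographically, first coordinate most
  significant).\<close>

definition admissible :: "nat \<Rightarrow> (nat list \<Rightarrow> nat) \<Rightarrow> bool" where
  "admissible d H \<longleftrightarrow> (\<forall>xs. length xs \<noteq> d \<longrightarrow> H xs = 0) \<and> finite {xs. H xs \<noteq> 0}"

definition code :: "(nat list \<Rightarrow> nat) \<Rightarrow> bool list set" where
  "code H = {u. \<exists>xs. 0 < H xs \<and> prefix u (coord_path xs @ replicate (H xs - 1) False)}"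

definition codes :: "nat \<Rightarrow> bool list set set" where
  "codes d = code ` Collect (admissible d)"

lemma code_zero [simp]: "code (\<lambda>_. 0) = {}"
  by (simp add: code_def)

lemma admissible_zero [simp]: "admissible d (\<lambda>_. 0)"
  by (simp add: admissible_def)

lemma empty_in_codes: "{} \<in> codes d"
  unfolding codes_def by (metis admissible_zero code_zero image_eqI mem_Collect_eq)

lemma Nil_in_code: "[] \<in> code H \<longleftrightarrow> H \<noteq> (\<lambda>_. 0)"
  by (auto simp: code_def)

lemma code_eq_empty: "code H = {} \<longleftrightarrow> H = (\<lambda>_. 0)"
  using Nil_in_code by (auto simp: code_def)

lemma Nil_in_codes: "S \<in> codes d \<Longrightarrow> S \<noteq> {} \<Longrightarrow> [] \<in> S"
  unfolding codes_def using Nil_in_code code_eq_empty by blast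

lemma is_tree_code:
  assumes "admissible d H" shows "is_tree (unit_tree (code H))"
proof -
  have "code H \<subseteq> (\<Union>xs\<in>{xs. H xs \<noteq> 0}. set (prefixes (coord_path xs @ replicate (H xs - 1) False)))"
    unfolding code_def by auto
  moreover have "finite {xs. H xs \<noteq> 0}" using assms by (simp add: admissible_def)
  ultimately have "finite (code H)" by (meson finite_UN_I finite_set finite_subset)
  moreover have "u \<in> code H" if "u @ v \<in> code H" for u v
    using that unfolding code_def by (auto dest: append_prefixD)
  ultimately show ?thesis by (simp add: is_tree_def)
qed

lemma is_tree_codes: "S \<in> codes d \<Longrightarrow> is_tree (unit_tree S)"
  unfolding codes_def using is_tree_code by blast

lemma prefix_coord_path:
  "length xs = length ys \<Longrightarrow> prefix (coord_path xs @ w) (coord_path ys @ w') \<Longrightarrow> xs = ys \<and> prefix w w'"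
proof (induction xs arbitrary: ys)
  case (Cons x xs)
  then obtain y ys' where ys: "ys = y # ys'" by (cases ys) auto
  have "x = y \<and> prefix (coord_path xs @ w) (coord_path ys' @ w')"
    using Cons.prems(2) unfolding ys
  proof (induction x arbitrary: y)
    case 0 then show ?case by (cases y) auto
  next
    case (Suc x) then show ?case by (cases y) auto
  qed
  then show ?case using Cons.IH[of ys'] Cons.prems(1) ys by auto
qed simp

lemma path_in_code:
  assumes "admissible d H" "length xs = d"
  shows "coord_path xs @ replicate i False \<in> code H \<longleftrightarrow> i < H xs"
proof
  assume "coord_path xs @ replicate i False \<in> code H"
  then obtain ys where ys: "0 < H ys" "prefix (coord_path xs @ replicate i False) (coord_path ys @ replicate (H ys - 1) False)"
    by (auto simp: code_def)
  then have "length ys = d" using assms(1) by (auto simp: admissible_def)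
  then have "xs = ys" "prefix (replicate i False) (replicate (H ys - 1) False)"
    using prefix_coord_path[OF _ ys(2)] assms(2) by auto
  then show "i < H xs" using ys(1) prefix_length_le by fastforce
next
  assume "i < H xs"
  then have "replicate (H xs - 1) False = replicate i False @ replicate (H xs - 1 - i) False"
    by (simp add: replicate_add[symmetric])
  then show "coord_path xs @ replicate i False \<in> code H"
    using \<open>i < H xs\<close> unfolding code_def by (intro CollectI exI[of _ xs]) simp
qed

lemma code_inj:
  assumes "admissible d H\<^sub>1" "admissible d H\<^sub>2" "code H\<^sub>1 = code H\<^sub>2"
  shows "H\<^sub>1 = H\<^sub>2"
proof
  fix xs show "H\<^sub>1 xs = H\<^sub>2 xs"
  proof (cases "length xs = d")
    case True
    then have "i < H\<^sub>1 xs \<longleftrightarrow> i < H\<^sub>2 xs" for i using path_in_code assms by metis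
    then show ?thesis by (meson less_irrefl_nat nat_neq_iff)
  next
    case False then show ?thesis using assms by (simp add: admissible_def)
  qed
qed

lemma bij_code: "bij_betw code (Collect (admissible d)) (codes d)"
  unfolding bij_betw_def inj_on_def codes_def using code_inj by blast

section \<open>Recursive structure of the codes\<close>

definition slice :: "(nat list \<Rightarrow> nat) \<Rightarrow> nat list \<Rightarrow> nat" where
  "slice H xs = H (0 # xs)"

fun shift :: "(nat list \<Rightarrow> nat) \<Rightarrow> nat list \<Rightarrow> nat" where
  "shift H [] = 0"
| "shift H (j # ys) = H (Suc j # ys)"

fun glue :: "(nat list \<Rightarrow> nat) \<Rightarrow> (nat list \<Rightarrow> nat) \<Rightarrow> nat list \<Rightarrow> nat" where
  "glue L R [] = 0"
| "glue L R (0 # ys) = L ys"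
| "glue L R (Suc j # ys) = R (j # ys)"

definition root_pred :: "(nat list \<Rightarrow> nat) \<Rightarrow> nat list \<Rightarrow> nat" where
  "root_pred H xs = (if xs = [] then H [] - 1 else 0)"

lemma finite_support_slice:
  assumes "finite {xs. H xs \<noteq> 0}" shows "finite {xs. slice H xs \<noteq> 0}"
proof -
  have "{xs. slice H xs \<noteq> 0} = Cons 0 -` {xs. H xs \<noteq> 0}" by (auto simp: slice_def)
  moreover have "inj (Cons (0::nat))" by (simp add: inj_on_def)
  ultimately show ?thesis using finite_vimageI[OF assms] by metis
qed

lemma finite_support_shift:
  assumes "finite {xs. H xs \<noteq> 0}" shows "finite {xs. shift H xs \<noteq> 0}"
proof -
  have "{xs. shift H xs \<noteq> 0} \<subseteq> (\<lambda>xs. (hd xs - 1) # tl xs) ` {xs. H xs \<noteq> 0}"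
  proof
    fix xs assume "xs \<in> {xs. shift H xs \<noteq> 0}"
    then obtain j ys where "xs = j # ys" "H (Suc j # ys) \<noteq> 0" by (cases xs) auto
    then show "xs \<in> (\<lambda>xs. (hd xs - 1) # tl xs) ` {xs. H xs \<noteq> 0}"
      by (auto intro: image_eqI[of _ _ "Suc j # ys"])
  qed
  then show ?thesis using assms finite_surj by blast
qed

lemma finite_support_glue:
  assumes "finite {xs. L xs \<noteq> 0}" "finite {xs. R xs \<noteq> 0}"
  shows "finite {xs. glue L R xs \<noteq> 0}"
proof -
  have "{xs. glue L R xs \<noteq> 0} \<subseteq> Cons 0 ` {xs. L xs \<noteq> 0} \<union> (\<lambda>xs. Suc (hd xs) # tl xs) ` {xs. R xs \<noteq> 0}"
  proof
    fix xs assume xs: "xs \<in> {xs. glue L R xs \<noteq> 0}"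
    then obtain j ys where "xs = j # ys" by (cases xs) auto
    with xs show "xs \<in> Cons 0 ` {xs. L xs \<noteq> 0} \<union> (\<lambda>xs. Suc (hd xs) # tl xs) ` {xs. R xs \<noteq> 0}"
      by (cases j) (auto intro: image_eqI[of _ _ "(j - 1) # ys"])
  qed
  then show ?thesis using assms by (meson finite_Un finite_imageI finite_subset)
qed

lemma admissible_slice: "admissible (Suc d) H \<Longrightarrow> admissible d (slice H)"
  using finite_support_slice by (auto simp: admissible_def slice_def)

lemma admissible_shift:
  assumes "admissible (Suc d) H" shows "admissible (Suc d) (shift H)"
proof -
  have "shift H xs = 0" if "length xs \<noteq> Suc d" for xs
    using assms that by (cases xs) (auto simp: admissible_def)
  then show ?thesis using assms finite_support_shift by (auto simp: admissible_def)
qed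

lemma admissible_glue:
  assumes "admissible d L" "admissible (Suc d) R" shows "admissible (Suc d) (glue L R)"
proof -
  have "glue L R xs = 0" if "length xs \<noteq> Suc d" for xs
    using assms that by (induction L R xs rule: glue.induct) (auto simp: admissible_def)
  then show ?thesis using assms finite_support_glue by (auto simp: admissible_def)
qed

lemma admissible_root_pred: "admissible 0 (root_pred H)"
  unfolding admissible_def root_pred_def by (auto intro: finite_subset[of _ "{[]}"])

lemma admissible_0_slice: "admissible 0 H \<Longrightarrow> slice H = (\<lambda>_. 0)"
  by (auto simp: admissible_def slice_def)

lemma admissible_0_shift: "admissible 0 H \<Longrightarrow> shift H = (\<lambda>_. 0)"
proof
  fix xs show "admissible 0 H \<Longrightarrow> shift H xs = 0" by (cases xs) (auto simp: admissible_def)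
qed

lemma admissible_Suc_root_pred: "admissible (Suc d) H \<Longrightarrow> root_pred H = (\<lambda>_. 0)"
  by (auto simp: admissible_def root_pred_def)

lemma slice_zero [simp]: "slice (\<lambda>_. 0) = (\<lambda>_. 0)"
  by (simp add: slice_def fun_eq_iff)

lemma shift_zero [simp]: "shift (\<lambda>_. 0) = (\<lambda>_. 0)"
proof
  fix xs show "shift (\<lambda>_. 0) xs = 0" by (cases xs) auto
qed

lemma glue_zero: "glue (\<lambda>_. 0) (\<lambda>_. 0) = (\<lambda>_. 0)"
proof
  fix xs :: "nat list" show "glue (\<lambda>_. 0) (\<lambda>_. 0) xs = 0"
    by (cases xs; cases "hd xs") auto
qed

lemma slice_glue [simp]: "slice (glue L R) = L"
  by (rule ext) (simp add: slice_def)

lemma shift_glue: "R [] = 0 \<Longrightarrow> shift (glue L R) = R"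
proof
  fix xs show "R [] = 0 \<Longrightarrow> shift (glue L R) xs = R xs" by (cases xs) auto
qed

lemma glue_slice_shift: "H [] = 0 \<Longrightarrow> glue (slice H) (shift H) = H"
proof
  fix xs show "H [] = 0 \<Longrightarrow> glue (slice H) (shift H) xs = H xs"
    by (induction "slice H" "shift H" xs rule: glue.induct) (auto simp: slice_def)
qed

lemma prefix_False_coord_path:
  "prefix (False # u) (coord_path xs @ replicate n False) \<longleftrightarrow>
     (xs = [] \<and> 0 < n \<and> prefix u (replicate (n - 1) False)) \<or>
     (\<exists>zs. xs = 0 # zs \<and> prefix u (coord_path zs @ replicate n False))"
proof (cases xs)
  case Nil then show ?thesis by (cases n) auto
next
  case (Cons x zs) then show ?thesis by (cases x) auto
qed

lemma prefix_True_coord_path: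
  "prefix (True # u) (coord_path xs @ replicate n False) \<longleftrightarrow>
     (\<exists>j zs. xs = Suc j # zs \<and> prefix u (coord_path (j # zs) @ replicate n False))"
proof (cases xs)
  case Nil then show ?thesis by (cases n) auto
next
  case (Cons x zs) then show ?thesis by (cases x) auto
qed

text \<open>The left subtree of a code codes root_pred H and slice H (of which at most one is
  nonzero for an admissible H); the right subtree codes shift H.\<close>

lemma residual_code_False: "residual (code H) [False] = code (root_pred H) \<union> code (slice H)"
proof -
  have root: "u \<in> code (root_pred H) \<longleftrightarrow> 0 < H [] - 1 \<and> prefix u (replicate (H [] - 1 - 1) False)" for u
    by (auto simp: code_def root_pred_def split: if_splits intro: exI[of _ "[]"])
  have "u \<in> residual (code H) [False] \<longleftrightarrow> u \<in> code (root_pred H) \<or> u \<in> code (slice H)" for u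
    unfolding root by (auto simp: residual_def code_def slice_def prefix_False_coord_path
        intro: exI[of _ "[]"])
  then show ?thesis by blast
qed

lemma residual_code_True: "residual (code H) [True] = code (shift H)"
proof -
  have "u \<in> residual (code H) [True] \<longleftrightarrow> u \<in> code (shift H)" for u
  proof
    assume "u \<in> residual (code H) [True]"
    then obtain j zs where "0 < H (Suc j # zs)"
      "prefix u (coord_path (j # zs) @ replicate (H (Suc j # zs) - 1) False)"
      by (auto simp: residual_def code_def prefix_True_coord_path)
    then show "u \<in> code (shift H)" unfolding code_def by (intro CollectI exI[of _ "j # zs"]) simp
  next
    assume "u \<in> code (shift H)"
    then obtain xs where "0 < shift H xs" "prefix u (coord_path xs @ replicate (shift H xs - 1) False)"
      by (auto simp: code_def)
    then show "u \<in> residual (code H) [True]"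
      by (cases xs) (auto simp: residual_def code_def prefix_True_coord_path)
  qed
  then show ?thesis by blast
qed

text \<open>The codes of level 0 are the finite left-going paths.\<close>

lemma codes_0_iff:
  assumes "[] \<in> S"
  shows "S \<in> codes 0 \<longleftrightarrow> residual S [True] = {} \<and> residual S [False] \<in> codes 0"
proof
  assume "S \<in> codes 0"
  then obtain H where "admissible 0 H" "S = code H" by (auto simp: codes_def)
  then show "residual S [True] = {} \<and> residual S [False] \<in> codes 0"
    using residual_code_False[of H] residual_code_True[of H] admissible_root_pred
    by (auto simp: codes_def admissible_0_slice admissible_0_shift)
next
  assume "residual S [True] = {} \<and> residual S [False] \<in> codes 0"
  then obtain L where L: "admissible 0 L" "residual S [False] = code L"
    and R: "residual S [True] = {}" by (auto simp: codes_def)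
  define H :: "nat list \<Rightarrow> nat" where "H xs = (if xs = [] then Suc (L []) else 0)" for xs
  have H: "admissible 0 H" "root_pred H = L"
    using L(1) by (auto simp: H_def admissible_def root_pred_def intro: finite_subset[of _ "{[]}"])
  have "S = code H"
  proof (rule set_eq_by_residuals[OF assms])
    show "[] \<in> code H" by (auto simp: Nil_in_code H_def fun_eq_iff)
    fix b show "residual S [b] = residual (code H) [b]"
      using L R H residual_code_False[of H] residual_code_True[of H]
      by (cases b) (auto simp: admissible_0_slice admissible_0_shift)
  qed
  then show "S \<in> codes 0" using H by (auto simp: codes_def)
qed

text \<open>This is
  the local condition checked by the automaton for codes.\<close>

lemma codes_Suc_iff:
  assumes "[] \<in> S"
  shows "S \<in> codes (Suc d) \<longleftrightarrow> residual S [False] \<in> codes d \<and> residual S [True] \<in> codes (Suc d) \<and>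
           (residual S [False] \<noteq> {} \<or> residual S [True] \<noteq> {})"
proof
  assume "S \<in> codes (Suc d)"
  then obtain H where H: "admissible (Suc d) H" "S = code H" by (auto simp: codes_def)
  have res: "residual S [False] = code (slice H)" "residual S [True] = code (shift H)"
    using H residual_code_False[of H] residual_code_True[of H] by (auto simp: admissible_Suc_root_pred)
  have "H [] = 0" using H(1) by (simp add: admissible_def)
  moreover have "H \<noteq> (\<lambda>_. 0)" using assms H Nil_in_code by blast
  ultimately have "slice H \<noteq> (\<lambda>_. 0) \<or> shift H \<noteq> (\<lambda>_. 0)"
    using glue_slice_shift[of H] glue_zero by metis
  then show "residual S [False] \<in> codes d \<and> residual S [True] \<in> codes (Suc d) \<and>
           (residual S [False] \<noteq> {} \<or> residual S [True] \<noteq> {})"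
    using res H(1) admissible_slice admissible_shift code_eq_empty by (auto simp: codes_def)
next
  assume res: "residual S [False] \<in> codes d \<and> residual S [True] \<in> codes (Suc d) \<and>
           (residual S [False] \<noteq> {} \<or> residual S [True] \<noteq> {})"
  then obtain L R where L: "admissible d L" "residual S [False] = code L"
    and R: "admissible (Suc d) R" "residual S [True] = code R" by (auto simp: codes_def)
  define H where "H = glue L R"
  have "R [] = 0" using R(1) by (simp add: admissible_def)
  then have H: "admissible (Suc d) H" "slice H = L" "shift H = R"
    using L R by (simp_all add: H_def admissible_glue shift_glue)
  have "S = code H"
  proof (rule set_eq_by_residuals[OF assms])
    have "L \<noteq> (\<lambda>_. 0) \<or> R \<noteq> (\<lambda>_. 0)" using res L R code_eq_empty by auto
    then have "H \<noteq> (\<lambda>_. 0)" using H(2,3) by auto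
    then show "[] \<in> code H" by (simp add: Nil_in_code)
    fix b show "residual S [b] = residual (code H) [b]"
      using L R H residual_code_False[of H] residual_code_True[of H]
      by (cases b) (auto simp: admissible_Suc_root_pred)
  qed
  then show "S \<in> codes (Suc d)" using H by (auto simp: codes_def)
qed

definition lead_less :: "(nat list \<Rightarrow> nat) \<Rightarrow> (nat list \<Rightarrow> nat) \<Rightarrow> bool" where
  "lead_less H\<^sub>1 H\<^sub>2 \<longleftrightarrow> (\<exists>xs. H\<^sub>1 xs < H\<^sub>2 xs \<and> (\<forall>ys. xs < ys \<longrightarrow> H\<^sub>1 ys = H\<^sub>2 ys))"

lemma lead_less_asym: "lead_less H\<^sub>1 H\<^sub>2 \<Longrightarrow> \<not> lead_less H\<^sub>2 H\<^sub>1"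
proof
  assume "lead_less H\<^sub>1 H\<^sub>2" "lead_less H\<^sub>2 H\<^sub>1"
  then obtain xs ys where
    xs: "H\<^sub>1 xs < H\<^sub>2 xs" "\<forall>zs. xs < zs \<longrightarrow> H\<^sub>1 zs = H\<^sub>2 zs" and
    ys: "H\<^sub>2 ys < H\<^sub>1 ys" "\<forall>zs. ys < zs \<longrightarrow> H\<^sub>1 zs = H\<^sub>2 zs"
    unfolding lead_less_def by metis
  then show False by (cases xs ys rule: linorder_cases) auto
qed

lemma lead_less_total:
  assumes "finite {xs. H\<^sub>1 xs \<noteq> 0}" "finite {xs. H\<^sub>2 xs \<noteq> 0}" "H\<^sub>1 \<noteq> H\<^sub>2"
  shows "lead_less H\<^sub>1 H\<^sub>2 \<or> lead_less H\<^sub>2 H\<^sub>1"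
proof -
  let ?D = "{xs. H\<^sub>1 xs \<noteq> H\<^sub>2 xs}"
  have "?D \<subseteq> {xs. H\<^sub>1 xs \<noteq> 0} \<union> {xs. H\<^sub>2 xs \<noteq> 0}" by auto
  then have fin: "finite ?D" using assms(1,2) by (meson finite_Un finite_subset)
  have "?D \<noteq> {}" using assms(3) by auto
  then have max: "H\<^sub>1 (Max ?D) \<noteq> H\<^sub>2 (Max ?D)" using Max_in[OF fin] by blast
  have above: "H\<^sub>1 ys = H\<^sub>2 ys" if "Max ?D < ys" for ys
    using Max_ge[OF fin, of ys] that by (meson leD mem_Collect_eq)
  show ?thesis
  proof (cases "H\<^sub>1 (Max ?D) < H\<^sub>2 (Max ?D)")
    case True then show ?thesis unfolding lead_less_def using above by blast
  next
    case False
    then have "H\<^sub>2 (Max ?D) < H\<^sub>1 (Max ?D)" using max by simp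
    then show ?thesis unfolding lead_less_def using above by metis
  qed
qed

definition compare_coeffs :: "(nat list \<Rightarrow> nat) \<Rightarrow> (nat list \<Rightarrow> nat) \<Rightarrow> comp" where
  "compare_coeffs H\<^sub>1 H\<^sub>2 =
     (if lead_less H\<^sub>1 H\<^sub>2 then Less else if lead_less H\<^sub>2 H\<^sub>1 then Greater else Equiv)"

lemma compare_coeffs_refl [simp]: "compare_coeffs H H = Equiv"
  using lead_less_asym by (auto simp: compare_coeffs_def)

lemma compare_coeffs_Equiv_iff:
  "finite {xs. H\<^sub>1 xs \<noteq> 0} \<Longrightarrow> finite {xs. H\<^sub>2 xs \<noteq> 0} \<Longrightarrow> compare_coeffs H\<^sub>1 H\<^sub>2 = Equiv \<longleftrightarrow> H\<^sub>1 = H\<^sub>2"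
  using lead_less_total lead_less_asym by (auto simp: compare_coeffs_def split: if_splits)

lemma compare_coeffs_not_Greater_iff:
  "finite {xs. H\<^sub>1 xs \<noteq> 0} \<Longrightarrow> finite {xs. H\<^sub>2 xs \<noteq> 0} \<Longrightarrow>
     compare_coeffs H\<^sub>1 H\<^sub>2 \<noteq> Greater \<longleftrightarrow> lead_less H\<^sub>1 H\<^sub>2 \<or> H\<^sub>1 = H\<^sub>2"
  using lead_less_total lead_less_asym by (auto simp: compare_coeffs_def)

lemma compare_coeffs_zero:
  assumes "finite {xs. H xs \<noteq> 0}" "H \<noteq> (\<lambda>_. 0)"
  shows "compare_coeffs (\<lambda>_. 0) H = Less" "compare_coeffs H (\<lambda>_. 0) = Greater"
proof -
  have "lead_less (\<lambda>_. 0) H" "\<not> lead_less H (\<lambda>_. 0)"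
    using lead_less_total[of "\<lambda>_. 0" H] assms by (auto simp: lead_less_def)
  then show "compare_coeffs (\<lambda>_. 0) H = Less" "compare_coeffs H (\<lambda>_. 0) = Greater"
    by (auto simp: compare_coeffs_def)
qed

text \<open>Comparing functions with equal value at the empty tuple: the tuples with positive first
  coordinate are more significant, so the comparison of the shifts decides, and only if
  they agree does the comparison of the slices.\<close>

lemma lead_less_from_shift:
  assumes "lead_less (shift H\<^sub>1) (shift H\<^sub>2)" shows "lead_less H\<^sub>1 H\<^sub>2"
proof -
  obtain xs where xs: "shift H\<^sub>1 xs < shift H\<^sub>2 xs" "\<forall>ys. xs < ys \<longrightarrow> shift H\<^sub>1 ys = shift H\<^sub>2 ys"
    using assms unfolding lead_less_def by blast
  then obtain i zs where [simp]: "xs = i # zs" by (cases xs) auto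
  have "H\<^sub>1 ys = H\<^sub>2 ys" if above: "Suc i # zs < ys" for ys
  proof -
    obtain k ws where ys: "ys = k # ws" using above by (cases ys) auto
    then obtain j where "k = Suc j" using above by (cases k) auto
    then show ?thesis using xs(2)[rule_format, of "j # ws"] above ys by auto
  qed
  then show ?thesis using xs(1) unfolding lead_less_def by (intro exI[of _ "Suc i # zs"]) auto
qed

lemma lead_less_from_slice:
  assumes "shift H\<^sub>1 = shift H\<^sub>2" "lead_less (slice H\<^sub>1) (slice H\<^sub>2)" shows "lead_less H\<^sub>1 H\<^sub>2"
proof -
  obtain zs where zs: "slice H\<^sub>1 zs < slice H\<^sub>2 zs" "\<forall>ys. zs < ys \<longrightarrow> slice H\<^sub>1 ys = slice H\<^sub>2 ys"
    using assms(2) unfolding lead_less_def by blast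
  have "H\<^sub>1 ys = H\<^sub>2 ys" if above: "0 # zs < ys" for ys
  proof -
    obtain j ws where [simp]: "ys = j # ws" using above by (cases ys) auto
    show ?thesis
    proof (cases j)
      case 0 then show ?thesis using zs(2) above by (auto simp: slice_def)
    next
      case (Suc i) then show ?thesis using fun_cong[OF assms(1), of "i # ws"] by simp
    qed
  qed
  then show ?thesis using zs(1) unfolding lead_less_def slice_def by (intro exI[of _ "0 # zs"]) auto
qed

lemma lead_less_cases:
  assumes "H\<^sub>1 [] = H\<^sub>2 []" "lead_less H\<^sub>1 H\<^sub>2"
  shows "lead_less (shift H\<^sub>1) (shift H\<^sub>2) \<or> (shift H\<^sub>1 = shift H\<^sub>2 \<and> lead_less (slice H\<^sub>1) (slice H\<^sub>2))"
proof -
  obtain xs where xs: "H\<^sub>1 xs < H\<^sub>2 xs" "\<forall>ys. xs < ys \<longrightarrow> H\<^sub>1 ys = H\<^sub>2 ys"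
    using assms(2) unfolding lead_less_def by blast
  then obtain j zs where [simp]: "xs = j # zs" using assms(1) by (cases xs) auto
  show ?thesis
  proof (cases j)
    case 0
    have "shift H\<^sub>1 ys = shift H\<^sub>2 ys" for ys using xs(2) 0 by (cases ys) auto
    moreover have "lead_less (slice H\<^sub>1) (slice H\<^sub>2)"
      using xs 0 unfolding lead_less_def slice_def by (intro exI[of _ zs]) auto
    ultimately show ?thesis by blast
  next
    case (Suc i)
    have "shift H\<^sub>1 ys = shift H\<^sub>2 ys" if "i # zs < ys" for ys
      using that xs(2) Suc by (cases ys) auto
    then have "lead_less (shift H\<^sub>1) (shift H\<^sub>2)"
      using xs(1) Suc unfolding lead_less_def by (intro exI[of _ "i # zs"]) auto
    then show ?thesis by blast
  qed
qed

lemma compare_coeffs_by_shift_slice: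
  assumes "finite {xs. H\<^sub>1 xs \<noteq> 0}" "finite {xs. H\<^sub>2 xs \<noteq> 0}" "H\<^sub>1 [] = H\<^sub>2 []"
  shows "compare_coeffs H\<^sub>1 H\<^sub>2 = (let c = compare_coeffs (shift H\<^sub>1) (shift H\<^sub>2) in
           if c = Equiv then compare_coeffs (slice H\<^sub>1) (slice H\<^sub>2) else c)"
proof -
  have "lead_less H\<^sub>1 H\<^sub>2 \<longleftrightarrow> lead_less (shift H\<^sub>1) (shift H\<^sub>2) \<or>
          (shift H\<^sub>1 = shift H\<^sub>2 \<and> lead_less (slice H\<^sub>1) (slice H\<^sub>2))"
    and "lead_less H\<^sub>2 H\<^sub>1 \<longleftrightarrow> lead_less (shift H\<^sub>2) (shift H\<^sub>1) \<or>
          (shift H\<^sub>1 = shift H\<^sub>2 \<and> lead_less (slice H\<^sub>2) (slice H\<^sub>1))"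
    using lead_less_cases lead_less_from_shift lead_less_from_slice assms(3) by metis+
  moreover have "compare_coeffs (shift H\<^sub>1) (shift H\<^sub>2) = Equiv \<longleftrightarrow> shift H\<^sub>1 = shift H\<^sub>2"
    using assms(1,2) by (intro compare_coeffs_Equiv_iff finite_support_shift)
  ultimately show ?thesis using lead_less_asym by (auto simp: compare_coeffs_def Let_def)
qed

lemma lead_less_at_root:
  assumes "admissible 0 H\<^sub>1" "admissible 0 H\<^sub>2"
  shows "lead_less H\<^sub>1 H\<^sub>2 \<longleftrightarrow> H\<^sub>1 [] < H\<^sub>2 []"
proof
  assume "lead_less H\<^sub>1 H\<^sub>2"
  then obtain xs where "H\<^sub>1 xs < H\<^sub>2 xs" unfolding lead_less_def by blast
  moreover have "xs = []" using calculation assms by (auto simp: admissible_def)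
  ultimately show "H\<^sub>1 [] < H\<^sub>2 []" by simp
next
  assume "H\<^sub>1 [] < H\<^sub>2 []"
  moreover have "H\<^sub>1 ys = H\<^sub>2 ys" if "[] < ys" for ys
    using that assms by (auto simp: admissible_def)
  ultimately show "lead_less H\<^sub>1 H\<^sub>2" unfolding lead_less_def by blast
qed

lemma compare_coeffs_root_pred:
  assumes "admissible 0 H\<^sub>1" "admissible 0 H\<^sub>2" "0 < H\<^sub>1 []" "0 < H\<^sub>2 []"
  shows "compare_coeffs (root_pred H\<^sub>1) (root_pred H\<^sub>2) = compare_coeffs H\<^sub>1 H\<^sub>2"
proof -
  have "lead_less H\<^sub>1 H\<^sub>2 \<longleftrightarrow> H\<^sub>1 [] < H\<^sub>2 []" "lead_less H\<^sub>2 H\<^sub>1 \<longleftrightarrow> H\<^sub>2 [] < H\<^sub>1 []"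
    "lead_less (root_pred H\<^sub>1) (root_pred H\<^sub>2) \<longleftrightarrow> H\<^sub>1 [] - 1 < H\<^sub>2 [] - 1"
    "lead_less (root_pred H\<^sub>2) (root_pred H\<^sub>1) \<longleftrightarrow> H\<^sub>2 [] - 1 < H\<^sub>1 [] - 1"
    using assms(1,2) admissible_root_pred by (simp_all add: lead_less_at_root root_pred_def)
  then show ?thesis using assms(3,4) by (auto simp: compare_coeffs_def)
qed

lemma compare_coeffs_children:
  assumes H: "admissible d H\<^sub>1" "admissible d H\<^sub>2" and nonzero: "H\<^sub>1 \<noteq> (\<lambda>_. 0)" "H\<^sub>2 \<noteq> (\<lambda>_. 0)"
  obtains dL L\<^sub>1 L\<^sub>2 dR R\<^sub>1 R\<^sub>2 where
    "admissible dL L\<^sub>1" "admissible dL L\<^sub>2" "admissible dR R\<^sub>1" "admissible dR R\<^sub>2"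
    "residual (code H\<^sub>1) [False] = code L\<^sub>1" "residual (code H\<^sub>2) [False] = code L\<^sub>2"
    "residual (code H\<^sub>1) [True] = code R\<^sub>1" "residual (code H\<^sub>2) [True] = code R\<^sub>2"
    "compare_coeffs H\<^sub>1 H\<^sub>2 = (let c = compare_coeffs R\<^sub>1 R\<^sub>2 in
       if c = Equiv then compare_coeffs L\<^sub>1 L\<^sub>2 else c)"
proof (cases d)
  case 0
  have "0 < H\<^sub>1 []" "0 < H\<^sub>2 []" using H nonzero 0
    by (auto simp: admissible_def fun_eq_iff) (metis gr_implies_not0)+
  then show ?thesis
    using that[of 0 "root_pred H\<^sub>1" "root_pred H\<^sub>2" 0 "\<lambda>_. 0" "\<lambda>_. 0"] H 0
      residual_code_False residual_code_True admissible_root_pred compare_coeffs_root_pred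
    by (simp add: admissible_0_slice admissible_0_shift)
next
  case (Suc e)
  have "H\<^sub>1 [] = H\<^sub>2 []" "finite {xs. H\<^sub>1 xs \<noteq> 0}" "finite {xs. H\<^sub>2 xs \<noteq> 0}"
    using H Suc by (auto simp: admissible_def)
  then show ?thesis
    using that[of e "slice H\<^sub>1" "slice H\<^sub>2" "Suc e" "shift H\<^sub>1" "shift H\<^sub>2"] H Suc
      residual_code_False residual_code_True compare_coeffs_by_shift_slice
    by (simp add: admissible_slice admissible_shift admissible_Suc_root_pred)
qed

section \<open>An automaton recognising the codes\<close>

text \<open>The automaton for codes of level k remembers, for the subtree below the current node,
  whether it is nonempty and for which levels d <= k it is a code.\<close>

type_synonym profile = "bool \<times> nat set"

definition code_profile :: "nat \<Rightarrow> bool list set \<Rightarrow> profile" where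
  "code_profile k S = (S \<noteq> {}, {d. d \<le> k \<and> S \<in> codes d})"

definition profile_step :: "nat \<Rightarrow> profile \<Rightarrow> profile \<Rightarrow> profile" where
  "profile_step k x y = (True, {d. d \<le> k \<and>
     ((d = 0 \<and> \<not> fst y \<and> 0 \<in> snd x) \<or> (0 < d \<and> d - 1 \<in> snd x \<and> d \<in> snd y \<and> (fst x \<or> fst y)))})"

definition dead_profile :: profile where
  "dead_profile = (True, {})"

definition profiles :: "nat \<Rightarrow> profile set" where
  "profiles k = UNIV \<times> Pow {..k}"

lemma code_profile_empty: "code_profile k {} = (False, {..k})"
  using empty_in_codes by (auto simp: code_profile_def)

lemma code_profile_eq_empty_iff: "code_profile k S = code_profile k {} \<longleftrightarrow> S = {}"
  by (auto simp: code_profile_def)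

lemma code_profile_rootless: "[] \<notin> S \<Longrightarrow> S \<noteq> {} \<Longrightarrow> code_profile k S = dead_profile"
  using Nil_in_codes by (auto simp: code_profile_def dead_profile_def)

lemma code_profile_step:
  assumes "[] \<in> S"
  shows "code_profile k S =
           profile_step k (code_profile k (residual S [False])) (code_profile k (residual S [True]))"
proof -
  let ?L = "code_profile k (residual S [False])" and ?R = "code_profile k (residual S [True])"
  have "S \<in> codes d \<longleftrightarrow> d \<in> snd (profile_step k ?L ?R)" if "d \<le> k" for d
  proof (cases d)
    case 0 then show ?thesis
      using that codes_0_iff[OF assms] by (simp add: profile_step_def code_profile_def)
  next
    case (Suc e) then show ?thesis
      using that codes_Suc_iff[OF assms] by (simp add: profile_step_def code_profile_def)
  qed
  moreover have "snd (profile_step k ?L ?R) \<subseteq> {..k}" "S \<noteq> {}"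
    using assms by (auto simp: profile_step_def)
  ultimately show ?thesis by (auto simp: code_profile_def profile_step_def)
qed

lemma profile_step_dead: "x = dead_profile \<or> y = dead_profile \<Longrightarrow> profile_step k x y = dead_profile"
  by (auto simp: profile_step_def dead_profile_def)

lemma profile_step_in_profiles: "profile_step k x y \<in> profiles k"
  by (auto simp: profile_step_def profiles_def)

lemma code_profile_in_profiles: "code_profile k S \<in> profiles k"
  by (auto simp: code_profile_def profiles_def)

lemma dead_profile_in_profiles: "dead_profile \<in> profiles k"
  by (simp add: dead_profile_def profiles_def)

definition code_ta :: "nat \<Rightarrow> (unit, profile) ta" where
  "code_ta k = TA (profiles k) (code_profile k {}) (\<lambda>_. profile_step k) {p \<in> profiles k. k \<in> snd p}"

lemma wf_code_ta: "wf_ta (code_ta k)"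
  by (auto simp: wf_ta_def code_ta_def profiles_def code_profile_empty profile_step_def)

lemma run_code_ta:
  assumes "is_tree t" shows "is_run (code_ta k) t (\<lambda>u. code_profile k (residual (dom t) u))"
  unfolding is_run_def code_ta_def
  using residual_outside_tree[OF assms] code_profile_step[of _ k] by (auto simp: domI)

lemma lang_code_ta: "lang (code_ta k) = unit_tree ` codes k"
proof -
  have "t \<in> lang (code_ta k) \<longleftrightarrow> is_tree t \<and> dom t \<in> codes k" for t
  proof (cases "is_tree t")
    case True
    then have "accepts (code_ta k) t \<longleftrightarrow> code_profile k (dom t) \<in> final (code_ta k)"
      using accepts_iff_run[OF True run_code_ta[OF True]] by simp
    then show ?thesis using True by (auto simp: lang_def code_ta_def code_profile_def profiles_def)
  qed (simp add: lang_def)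
  moreover have "t \<in> unit_tree ` codes k \<longleftrightarrow> is_tree t \<and> dom t \<in> codes k" for t
  proof
    assume "t \<in> unit_tree ` codes k"
    then show "is_tree t \<and> dom t \<in> codes k" using is_tree_codes by auto
  next
    assume "is_tree t \<and> dom t \<in> codes k"
    then show "t \<in> unit_tree ` codes k" using unit_tree_dom[of t] by (metis image_eqI)
  qed
  ultimately show ?thesis by blast
qed

type_synonym pair_label = "unit option \<times> unit option"

definition fst_track :: "pair_label tree \<Rightarrow> bool list set" where
  "fst_track s = {u. \<exists>b. s u = Some (Some (), b)}"

definition snd_track :: "pair_label tree \<Rightarrow> bool list set" where
  "snd_track s = {u. \<exists>a. s u = Some (a, Some ())}"

definition swap_tree :: "('a \<times> 'b) tree \<Rightarrow> ('b \<times> 'a) tree" where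
  "swap_tree s = map_option prod.swap \<circ> s"

definition subtree :: "'a tree \<Rightarrow> bool list \<Rightarrow> 'a tree" where
  "subtree s u = (\<lambda>v. s (u @ v))"

lemma subtree_Nil [simp]: "subtree s [] = s"
  by (simp add: subtree_def)

definition no_blank :: "pair_label tree \<Rightarrow> bool" where
  "no_blank s \<longleftrightarrow> (\<forall>u. s u \<noteq> Some (None, None))"

lemma unit_option_neq_Some [simp]: "(x :: unit option) \<noteq> Some () \<longleftrightarrow> x = None"
  by (cases x) auto

lemma fst_track_swap_tree [simp]: "fst_track (swap_tree s) = snd_track s"
  by (auto simp: fst_track_def snd_track_def swap_tree_def)

lemma subtree_swap_tree [simp]: "subtree (swap_tree s) u = swap_tree (subtree s u)"
  by (simp add: subtree_def swap_tree_def comp_def)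

lemma no_blank_swap_tree [simp]: "no_blank (swap_tree s) \<longleftrightarrow> no_blank s"
  by (auto simp: no_blank_def swap_tree_def)

lemma is_tree_swap_tree: "is_tree s \<Longrightarrow> is_tree (swap_tree s)"
  by (simp add: is_tree_def swap_tree_def dom_def)

lemma no_blank_subtree:
  "no_blank (subtree s u) \<longleftrightarrow>
     s u \<noteq> Some (None, None) \<and> no_blank (subtree s (u @ [False])) \<and> no_blank (subtree s (u @ [True]))"
proof -
  have "(\<forall>v. P (u @ v)) \<longleftrightarrow> P u \<and> (\<forall>v. P (u @ [False] @ v)) \<and> (\<forall>v. P (u @ [True] @ v))" for P
    by (metis (full_types) append.right_neutral append_Cons append_Nil neq_Nil_conv)
  then show ?thesis unfolding no_blank_def subtree_def by simp
qed

lemma no_blank_outside_tree: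
  "is_tree s \<Longrightarrow> u \<notin> dom s \<Longrightarrow> no_blank (subtree s u) \<and> residual (fst_track s) u = {} \<and>
     residual (snd_track s) u = {}"
  unfolding is_tree_def no_blank_def subtree_def residual_def fst_track_def snd_track_def by blast

lemma Nil_in_residual_tracks:
  "s u = Some (a, b) \<Longrightarrow> ([] \<in> residual (fst_track s) u \<longleftrightarrow> a \<noteq> None) \<and>
     ([] \<in> residual (snd_track s) u \<longleftrightarrow> b \<noteq> None)"
  by (auto simp: fst_track_def snd_track_def)

lemma conv_tracks: "no_blank s \<Longrightarrow> conv (unit_tree (fst_track s)) (unit_tree (snd_track s)) = s"
proof
  fix u assume "no_blank s"
  then show "conv (unit_tree (fst_track s)) (unit_tree (snd_track s)) u = s u"
    by (cases "s u") (auto simp: conv_def unit_tree_def fst_track_def snd_track_def no_blank_def,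
        metis unit_option_neq_Some)
qed

lemma tracks_conv:
  "fst_track (conv (unit_tree S\<^sub>1) (unit_tree S\<^sub>2)) = S\<^sub>1"
  "snd_track (conv (unit_tree S\<^sub>1) (unit_tree S\<^sub>2)) = S\<^sub>2"
  "no_blank (conv (unit_tree S\<^sub>1) (unit_tree S\<^sub>2))"
  by (auto simp: fst_track_def snd_track_def no_blank_def conv_def unit_tree_def)

lemma is_tree_conv:
  assumes "is_tree (unit_tree S\<^sub>1)" "is_tree (unit_tree S\<^sub>2)"
  shows "is_tree (conv (unit_tree S\<^sub>1) (unit_tree S\<^sub>2))"
proof -
  have "dom (conv (unit_tree S\<^sub>1) (unit_tree S\<^sub>2)) = S\<^sub>1 \<union> S\<^sub>2"
    by (auto simp: conv_def split: if_splits)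
  then show ?thesis using assms by (simp add: is_tree_def) blast
qed

section \<open>An automaton recognising the order\<close>

text \<open>The first component of the automaton for the order checks that the first track is a
  code of level k (and that the tree is blank-free); its state is the profile of the
  first track below the current node, or the dead profile once a defect has been seen.\<close>

definition guarded_profile :: "nat \<Rightarrow> bool \<Rightarrow> bool list set \<Rightarrow> profile" where
  "guarded_profile k ok S = (if ok then code_profile k S else dead_profile)"

lemma guarded_profile_eq_empty_iff:
  "guarded_profile k ok S = code_profile k {} \<longleftrightarrow> ok \<and> S = {}"
  by (auto simp: guarded_profile_def code_profile_def dead_profile_def)

lemma guarded_profile_in_profiles: "guarded_profile k ok S \<in> profiles k"
  by (simp add: guarded_profile_def code_profile_in_profiles dead_profile_in_profiles)

lemma top_in_guarded_profile: "k \<in> snd (guarded_profile k ok S) \<longleftrightarrow> ok \<and> S \<in> codes k"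
  by (auto simp: guarded_profile_def code_profile_def dead_profile_def)

definition track_step :: "nat \<Rightarrow> pair_label \<Rightarrow> profile \<Rightarrow> profile \<Rightarrow> profile" where
  "track_step k ab x y = (case ab of
      (Some _, _) \<Rightarrow> profile_step k x y
    | (None, Some _) \<Rightarrow>
        if x = code_profile k {} \<and> y = code_profile k {} then code_profile k {} else dead_profile
    | (None, None) \<Rightarrow> dead_profile)"

definition track_ta :: "nat \<Rightarrow> (pair_label, profile) ta" where
  "track_ta k = TA (profiles k) (code_profile k {}) (track_step k) {}"

lemma wf_track_ta: "wf_ta (track_ta k)"
proof -
  have "track_step k (a, b) x y \<in> profiles k" for a b x y
    by (cases a; cases b) (simp_all add: track_step_def profile_step_in_profiles
        code_profile_in_profiles dead_profile_in_profiles)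
  moreover have "finite (profiles k)" by (simp add: profiles_def)
  ultimately show ?thesis
    by (simp add: wf_ta_def track_ta_def code_profile_in_profiles)
qed

text \<open>Local correctness of the track automaton; in a node without first component both
  children of the first track must be empty.\<close>

lemma track_step_correct:
  assumes root: "[] \<in> S \<longleftrightarrow> a \<noteq> None"
  shows "guarded_profile k ((a, b) \<noteq> (None, None) \<and> ok\<^sub>F \<and> ok\<^sub>T) S =
           track_step k (a, b) (guarded_profile k ok\<^sub>F (residual S [False]))
                               (guarded_profile k ok\<^sub>T (residual S [True]))"
proof (cases a)
  case (Some x)
  then show ?thesis using root code_profile_step[of S k] profile_step_dead[of _ _ k]
    by (auto simp: guarded_profile_def track_step_def)
next
  case None
  then have "[] \<notin> S" using root by simp
  then have "guarded_profile k (ok\<^sub>F \<and> ok\<^sub>T) S =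
      (if ok\<^sub>F \<and> ok\<^sub>T \<and> residual S [False] = {} \<and> residual S [True] = {} then code_profile k {} else dead_profile)"
    using empty_iff_residuals_empty[of S] code_profile_rootless[of S k] by (auto simp: guarded_profile_def)
  then show ?thesis using None
    by (cases b) (auto simp: track_step_def guarded_profile_eq_empty_iff guarded_profile_def
        code_profile_eq_empty_iff)
qed

lemma run_track_ta:
  assumes "is_tree s"
  shows "is_run (track_ta k) s (\<lambda>u. guarded_profile k (no_blank (subtree s u)) (residual (fst_track s) u))"
  unfolding is_run_def
proof (intro conjI allI impI)
  fix u assume "u \<notin> dom s"
  then show "guarded_profile k (no_blank (subtree s u)) (residual (fst_track s) u) = init (track_ta k)"
    using no_blank_outside_tree[OF assms] by (simp add: guarded_profile_def track_ta_def)
next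
  fix u ab assume "s u = Some ab"
  then show "guarded_profile k (no_blank (subtree s u)) (residual (fst_track s) u) =
      delta (track_ta k) ab (guarded_profile k (no_blank (subtree s (u @ [False]))) (residual (fst_track s) (u @ [False])))
        (guarded_profile k (no_blank (subtree s (u @ [True]))) (residual (fst_track s) (u @ [True])))"
    using track_step_correct[of "residual (fst_track s) u" "fst ab" k "snd ab"] Nil_in_residual_tracks[of s u]
      no_blank_subtree[of s u] by (cases ab) (simp add: track_ta_def)
qed

text \<open>The comparison automaton compares the right subtrees first and the left subtrees on a
  tie; an absent first (second) component makes the first (second) code the zero function.\<close>

definition cmp_step :: "pair_label \<Rightarrow> comp \<Rightarrow> comp \<Rightarrow> comp" where
  "cmp_step ab c\<^sub>F c\<^sub>T = (case ab of
      (Some _, Some _) \<Rightarrow> if c\<^sub>T = Equiv then c\<^sub>F else c\<^sub>T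
    | (Some _, None) \<Rightarrow> Greater
    | (None, Some _) \<Rightarrow> Less
    | (None, None) \<Rightarrow> Equiv)"

definition cmp_ta :: "(pair_label, comp) ta" where
  "cmp_ta = TA UNIV Equiv cmp_step {}"

lemma wf_cmp_ta: "wf_ta cmp_ta"
proof -
  have univ: "(UNIV :: comp set) = {Less, Equiv, Greater}" using comp.exhaust by auto
  have "finite (UNIV :: comp set)" unfolding univ by simp
  then show ?thesis by (simp add: wf_ta_def cmp_ta_def)
qed

lemma cmp_step_correct:
  assumes H: "admissible d H\<^sub>1" "admissible d H\<^sub>2"
    and labels: "H\<^sub>1 \<noteq> (\<lambda>_. 0) \<longleftrightarrow> a \<noteq> None" "H\<^sub>2 \<noteq> (\<lambda>_. 0) \<longleftrightarrow> b \<noteq> None" "(a, b) \<noteq> (None, None)"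
    and left: "\<And>e G\<^sub>1 G\<^sub>2. admissible e G\<^sub>1 \<Longrightarrow> admissible e G\<^sub>2 \<Longrightarrow>
      residual (code H\<^sub>1) [False] = code G\<^sub>1 \<Longrightarrow> residual (code H\<^sub>2) [False] = code G\<^sub>2 \<Longrightarrow>
      c\<^sub>F = compare_coeffs G\<^sub>1 G\<^sub>2"
    and right: "\<And>e G\<^sub>1 G\<^sub>2. admissible e G\<^sub>1 \<Longrightarrow> admissible e G\<^sub>2 \<Longrightarrow>
      residual (code H\<^sub>1) [True] = code G\<^sub>1 \<Longrightarrow> residual (code H\<^sub>2) [True] = code G\<^sub>2 \<Longrightarrow>
      c\<^sub>T = compare_coeffs G\<^sub>1 G\<^sub>2"
  shows "cmp_step (a, b) c\<^sub>F c\<^sub>T = compare_coeffs H\<^sub>1 H\<^sub>2"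
proof -
  have fin: "finite {xs. H\<^sub>1 xs \<noteq> 0}" "finite {xs. H\<^sub>2 xs \<noteq> 0}"
    using H by (simp_all add: admissible_def)
  consider "a = None" "b \<noteq> None" | "a \<noteq> None" "b = None" | "a \<noteq> None" "b \<noteq> None"
    using labels(3) by (cases a; cases b) auto
  then show ?thesis
  proof cases
    case 1 then show ?thesis
      using labels compare_coeffs_zero(1)[OF fin(2)] by (auto simp: cmp_step_def)
  next
    case 2 then show ?thesis
      using labels compare_coeffs_zero(2)[OF fin(1)] by (auto simp: cmp_step_def)
  next
    case 3
    obtain dL L\<^sub>1 L\<^sub>2 dR R\<^sub>1 R\<^sub>2 where children:
      "admissible dL L\<^sub>1" "admissible dL L\<^sub>2" "admissible dR R\<^sub>1" "admissible dR R\<^sub>2"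
      "residual (code H\<^sub>1) [False] = code L\<^sub>1" "residual (code H\<^sub>2) [False] = code L\<^sub>2"
      "residual (code H\<^sub>1) [True] = code R\<^sub>1" "residual (code H\<^sub>2) [True] = code R\<^sub>2"
      "compare_coeffs H\<^sub>1 H\<^sub>2 = (let c = compare_coeffs R\<^sub>1 R\<^sub>2 in
         if c = Equiv then compare_coeffs L\<^sub>1 L\<^sub>2 else c)"
      by (rule compare_coeffs_children[OF H]) (use labels 3 in simp_all)
    then show ?thesis using left[OF children(1,2,5,6)] right[OF children(3,4,7,8)] 3
      by (auto simp: cmp_step_def Let_def)
  qed
qed

lemma run_cmp_ta:
  assumes "is_tree s" "is_run cmp_ta s \<rho>"
  shows "no_blank (subtree s u) \<Longrightarrow> admissible d H\<^sub>1 \<Longrightarrow> admissible d H\<^sub>2 \<Longrightarrow>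
    residual (fst_track s) u = code H\<^sub>1 \<Longrightarrow> residual (snd_track s) u = code H\<^sub>2 \<Longrightarrow>
    \<rho> u = compare_coeffs H\<^sub>1 H\<^sub>2"
  using assms(1)
proof (induction u arbitrary: d H\<^sub>1 H\<^sub>2 rule: tree_node_induct)
  case (outside u)
  then have "H\<^sub>1 = (\<lambda>_. 0)" "H\<^sub>2 = (\<lambda>_. 0)" using no_blank_outside_tree[OF assms(1)] code_eq_empty by metis+
  then show ?case using outside assms(2) by (simp add: is_run_def cmp_ta_def)
next
  case (node u)
  obtain a b where ab: "s u = Some (a, b)" using node.hyps by auto
  have "H\<^sub>1 \<noteq> (\<lambda>_. 0) \<longleftrightarrow> a \<noteq> None" "H\<^sub>2 \<noteq> (\<lambda>_. 0) \<longleftrightarrow> b \<noteq> None"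
    using Nil_in_residual_tracks[of s u a b] ab node.prems Nil_in_code by metis+
  moreover have "(a, b) \<noteq> (None, None)" using node.prems(1) ab no_blank_subtree[of s u] by auto
  moreover have "no_blank (subtree s (u @ [c]))" for c
    using node.prems(1) no_blank_subtree[of s u] by (cases c) auto
  moreover have "residual (fst_track s) (u @ [c]) = residual (code H\<^sub>1) [c]"
    "residual (snd_track s) (u @ [c]) = residual (code H\<^sub>2) [c]" for c
    using node.prems(4,5) by (metis residual_residual)+
  ultimately have "cmp_step (a, b) (\<rho> (u @ [False])) (\<rho> (u @ [True])) = compare_coeffs H\<^sub>1 H\<^sub>2"
    using node.IH by (intro cmp_step_correct[OF node.prems(2,3)]) simp_all
  then show ?case using assms(2) ab by (simp add: is_run_def cmp_ta_def)
qed

definition pair_ta :: "nat \<Rightarrow> (pair_label, (profile \<times> profile) \<times> comp) ta" where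
  "pair_ta k = prod_ta (prod_ta (track_ta k) (relabel prod.swap (track_ta k)) {}) cmp_ta
     {((p, q), c). p \<in> profiles k \<and> q \<in> profiles k \<and> k \<in> snd p \<and> k \<in> snd q \<and> c \<noteq> Greater}"

lemma wf_pair_ta: "wf_ta (pair_ta k)"
  unfolding pair_ta_def
  by (intro wf_prod_ta wf_track_ta wf_relabel wf_cmp_ta)
     (auto simp: prod_ta_def relabel_def track_ta_def cmp_ta_def)

lemma accepts_pair_ta:
  assumes "is_tree s"
  shows "accepts (pair_ta k) s \<longleftrightarrow>
    no_blank s \<and> fst_track s \<in> codes k \<and> snd_track s \<in> codes k \<and> run_of cmp_ta s [] \<noteq> Greater"
proof -
  let ?track = "\<lambda>s u. guarded_profile k (no_blank (subtree s u)) (residual (fst_track s) u)"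
  have "is_run (relabel prod.swap (track_ta k)) s (?track (swap_tree s))"
    using run_track_ta[OF is_tree_swap_tree[OF assms]] by (simp add: is_run_relabel swap_tree_def)
  then have "is_run (pair_ta k) s (\<lambda>u. ((?track s u, ?track (swap_tree s) u), run_of cmp_ta s u))"
    unfolding pair_ta_def by (intro is_run_prod_ta run_track_ta run_exists assms)
  from accepts_iff_run[OF assms this] show ?thesis
    by (auto simp: pair_ta_def prod_ta_def guarded_profile_in_profiles top_in_guarded_profile)
qed

lemma lang_pair_ta:
  "lang (pair_ta k) = {conv (unit_tree (code H\<^sub>1)) (unit_tree (code H\<^sub>2)) | H\<^sub>1 H\<^sub>2.
     admissible k H\<^sub>1 \<and> admissible k H\<^sub>2 \<and> compare_coeffs H\<^sub>1 H\<^sub>2 \<noteq> Greater}"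
    (is "_ = ?R")
proof
  show "lang (pair_ta k) \<subseteq> ?R"
  proof
    fix s assume "s \<in> lang (pair_ta k)"
    then have s: "is_tree s" "accepts (pair_ta k) s" by (auto simp: lang_def)
    then obtain H\<^sub>1 H\<^sub>2 where H: "admissible k H\<^sub>1" "admissible k H\<^sub>2"
      "fst_track s = code H\<^sub>1" "snd_track s = code H\<^sub>2"
      and ok: "no_blank s" "run_of cmp_ta s [] \<noteq> Greater"
      using accepts_pair_ta by (auto simp: codes_def)
    have "run_of cmp_ta s [] = compare_coeffs H\<^sub>1 H\<^sub>2"
      using run_cmp_ta[OF s(1) run_exists[OF s(1)], of "[]"] H ok by simp
    then show "s \<in> ?R" using H ok conv_tracks[OF ok(1)] by fastforce
  qed
next
  show "?R \<subseteq> lang (pair_ta k)"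
  proof
    fix s assume "s \<in> ?R"
    then obtain H\<^sub>1 H\<^sub>2 where H: "admissible k H\<^sub>1" "admissible k H\<^sub>2" "compare_coeffs H\<^sub>1 H\<^sub>2 \<noteq> Greater"
      and s_def: "s = conv (unit_tree (code H\<^sub>1)) (unit_tree (code H\<^sub>2))" by blast
    have s: "is_tree s" unfolding s_def using H by (intro is_tree_conv is_tree_code)
    have tracks: "fst_track s = code H\<^sub>1" "snd_track s = code H\<^sub>2" "no_blank s"
      unfolding s_def by (rule tracks_conv)+
    have "run_of cmp_ta s [] = compare_coeffs H\<^sub>1 H\<^sub>2"
      using run_cmp_ta[OF s run_exists[OF s], of "[]"] H tracks by simp
    then show "s \<in> lang (pair_ta k)"
      using accepts_pair_ta[OF s] s tracks H by (auto simp: lang_def codes_def)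
  qed
qed

section \<open>The ordinal omega^(omega^k) and its coefficient functions\<close>

lemma Field_omega_exp: "Field (omega_exp r) = {f. fin_supp (Field r) f}"
  by (auto simp: Field_def omega_exp_def)

lemma Field_fin_ord: "Field (fin_ord k) = {..<k}"
  by (auto simp: Field_def fin_ord_def)

definition inner_points :: "nat \<Rightarrow> (nat \<Rightarrow> nat) set" where
  "inner_points k = {x. \<forall>i. k \<le> i \<longrightarrow> x i = 0}"

lemma Field_omega_exp_fin_ord: "Field (omega_exp (fin_ord k)) = inner_points k"
proof -
  have "fin_supp {..<k} x \<longleftrightarrow> x \<in> inner_points k" for x :: "nat \<Rightarrow> nat"
  proof
    assume "x \<in> inner_points k"
    then have "{i. x i \<noteq> 0} \<subseteq> {..<k}" by (auto simp: inner_points_def not_less[symmetric])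
    with \<open>x \<in> inner_points k\<close> show "fin_supp {..<k} x"
      by (auto simp: fin_supp_def inner_points_def intro: finite_subset)
  qed (auto simp: fin_supp_def inner_points_def)
  then show ?thesis by (auto simp: Field_omega_exp Field_fin_ord)
qed

text \<open>Listing an inner point from its most significant coordinate downwards turns the order
  of omega^k into the lexicographic order on lists of length k.\<close>

definition digits :: "nat \<Rightarrow> (nat \<Rightarrow> nat) \<Rightarrow> nat list" where
  "digits k x = map x (rev [0..<k])"

definition undigits :: "nat \<Rightarrow> nat list \<Rightarrow> nat \<Rightarrow> nat" where
  "undigits k xs i = (if i < k then xs ! (k - 1 - i) else 0)"

lemma length_digits [simp]: "length (digits k x) = k"
  by (simp add: digits_def)

lemma nth_digits: "i < k \<Longrightarrow> digits k x ! i = x (k - 1 - i)"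
  by (simp add: digits_def rev_nth)

lemma undigits_in_inner_points: "undigits k xs \<in> inner_points k"
  by (simp add: undigits_def inner_points_def)

lemma undigits_digits: "x \<in> inner_points k \<Longrightarrow> undigits k (digits k x) = x"
  by (auto simp: undigits_def inner_points_def nth_digits)

lemma digits_undigits: "length xs = k \<Longrightarrow> digits k (undigits k xs) = xs"
  by (rule nth_equalityI) (auto simp: nth_digits undigits_def)

lemma digits_less_iff:
  "digits k x < digits k y \<longleftrightarrow> (\<exists>a<k. x a < y a \<and> (\<forall>b. a < b \<and> b < k \<longrightarrow> x b = y b))"
proof -
  have take_eq: "take i (digits k x) = take i (digits k y) \<longleftrightarrow> (\<forall>j<i. x (k - 1 - j) = y (k - 1 - j))"
    if "i < k" for i
    using that by (auto simp: list_eq_iff_nth_eq nth_digits)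
  have "digits k x < digits k y \<longleftrightarrow>
      (\<exists>i<k. (\<forall>j<i. x (k - 1 - j) = y (k - 1 - j)) \<and> x (k - 1 - i) < y (k - 1 - i))"
    by (auto simp: list_less_def lexord_take_index_conv take_eq nth_digits)
  also have "\<dots> \<longleftrightarrow> (\<exists>a<k. x a < y a \<and> (\<forall>b. a < b \<and> b < k \<longrightarrow> x b = y b))"
  proof
    assume "\<exists>i<k. (\<forall>j<i. x (k - 1 - j) = y (k - 1 - j)) \<and> x (k - 1 - i) < y (k - 1 - i)"
    then obtain i where i: "i < k" "\<forall>j<i. x (k - 1 - j) = y (k - 1 - j)" "x (k - 1 - i) < y (k - 1 - i)"
      by blast
    have "x b = y b" if "k - 1 - i < b" "b < k" for b
      using i(2)[rule_format, of "k - 1 - b"] that by simp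
    then show "\<exists>a<k. x a < y a \<and> (\<forall>b. a < b \<and> b < k \<longrightarrow> x b = y b)"
      using i by (intro exI[of _ "k - 1 - i"]) auto
  next
    assume "\<exists>a<k. x a < y a \<and> (\<forall>b. a < b \<and> b < k \<longrightarrow> x b = y b)"
    then obtain a where a: "a < k" "x a < y a" "\<forall>b. a < b \<and> b < k \<longrightarrow> x b = y b" by blast
    have "x (k - 1 - j) = y (k - 1 - j)" if "j < k - 1 - a" for j
      using a(3) that by simp
    moreover have "k - 1 - (k - 1 - a) = a" using a(1) by simp
    ultimately show "\<exists>i<k. (\<forall>j<i. x (k - 1 - j) = y (k - 1 - j)) \<and> x (k - 1 - i) < y (k - 1 - i)"
      using a by (intro exI[of _ "k - 1 - a"]) auto
  qed
  finally show ?thesis .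
qed

lemma omega_exp_fin_ord_less_iff:
  assumes "x \<in> inner_points k" "y \<in> inner_points k"
  shows "(x, y) \<in> omega_exp (fin_ord k) \<and> y \<noteq> x \<longleftrightarrow> digits k x < digits k y"
proof -
  have "fin_supp (Field (fin_ord k)) x" "fin_supp (Field (fin_ord k)) y"
    using assms Field_omega_exp_fin_ord[of k] by (auto simp: Field_omega_exp)
  moreover have "(a, b) \<in> fin_ord k \<and> b \<noteq> a \<longleftrightarrow> a < b \<and> b < k" for a b
    by (auto simp: fin_ord_def)
  ultimately have "(x, y) \<in> omega_exp (fin_ord k) \<and> y \<noteq> x \<longleftrightarrow>
      (\<exists>a<k. x a < y a \<and> (\<forall>b. a < b \<and> b < k \<longrightarrow> x b = y b))"
    by (auto simp: omega_exp_def Field_fin_ord)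
  then show ?thesis by (simp add: digits_less_iff)
qed

definition coeffs :: "nat \<Rightarrow> ((nat \<Rightarrow> nat) \<Rightarrow> nat) \<Rightarrow> nat list \<Rightarrow> nat" where
  "coeffs k F xs = (if length xs = k then F (undigits k xs) else 0)"

lemma admissible_coeffs:
  assumes "fin_supp (inner_points k) F" shows "admissible k (coeffs k F)"
proof -
  have "{xs. coeffs k F xs \<noteq> 0} \<subseteq> digits k ` {x. F x \<noteq> 0}"
    by (auto simp: coeffs_def digits_undigits intro!: image_eqI[of _ _ "undigits k _"] split: if_splits)
  moreover have "finite {x. F x \<noteq> 0}" using assms by (simp add: fin_supp_def)
  ultimately have "finite {xs. coeffs k F xs \<noteq> 0}" by (meson finite_imageI finite_subset)
  moreover have "\<forall>xs. length xs \<noteq> k \<longrightarrow> coeffs k F xs = 0" by (simp add: coeffs_def)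
  ultimately show ?thesis unfolding admissible_def by blast
qed

lemma coeffs_inj:
  assumes "fin_supp (inner_points k) F" "fin_supp (inner_points k) G" "coeffs k F = coeffs k G"
  shows "F = G"
proof
  fix x show "F x = G x"
  proof (cases "x \<in> inner_points k")
    case True
    then show ?thesis using fun_cong[OF assms(3), of "digits k x"] by (simp add: coeffs_def undigits_digits)
  next
    case False then show ?thesis using assms(1,2) by (simp add: fin_supp_def)
  qed
qed

lemma coeffs_surj:
  assumes "admissible k H" shows "\<exists>F. fin_supp (inner_points k) F \<and> coeffs k F = H"
proof -
  define F where "F x = (if x \<in> inner_points k then H (digits k x) else 0)" for x
  have "{x. F x \<noteq> 0} \<subseteq> undigits k ` {xs. H xs \<noteq> 0}"
    by (auto simp: F_def undigits_digits intro!: image_eqI[of _ _ "digits k _"] split: if_splits)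
  moreover have "finite {xs. H xs \<noteq> 0}" using assms by (simp add: admissible_def)
  ultimately have "finite {x. F x \<noteq> 0}" by (meson finite_imageI finite_subset)
  moreover have "\<forall>x. x \<notin> inner_points k \<longrightarrow> F x = 0" by (simp add: F_def)
  ultimately have "fin_supp (inner_points k) F" unfolding fin_supp_def by blast
  moreover have "coeffs k F = H"
    using assms by (auto simp: fun_eq_iff coeffs_def F_def admissible_def digits_undigits
        undigits_in_inner_points)
  ultimately show ?thesis by blast
qed

lemma bij_coeffs: "bij_betw (coeffs k) {F. fin_supp (inner_points k) F} (Collect (admissible k))"
  unfolding bij_betw_def inj_on_def using coeffs_inj admissible_coeffs coeffs_surj by blast

lemma lead_less_coeffs:
  "(\<exists>x\<in>inner_points k. F x < G x \<and>
      (\<forall>y\<in>inner_points k. (x, y) \<in> omega_exp (fin_ord k) \<and> y \<noteq> x \<longrightarrow> F y = G y))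
    \<longleftrightarrow> lead_less (coeffs k F) (coeffs k G)"
proof
  assume "\<exists>x\<in>inner_points k. F x < G x \<and>
      (\<forall>y\<in>inner_points k. (x, y) \<in> omega_exp (fin_ord k) \<and> y \<noteq> x \<longrightarrow> F y = G y)"
  then obtain x where x: "x \<in> inner_points k" "F x < G x"
    "\<forall>y\<in>inner_points k. (x, y) \<in> omega_exp (fin_ord k) \<and> y \<noteq> x \<longrightarrow> F y = G y" by blast
  have "coeffs k F ys = coeffs k G ys" if "digits k x < ys" for ys
  proof (cases "length ys = k")
    case True
    then show ?thesis using x(3)[rule_format, of "undigits k ys"] that
        omega_exp_fin_ord_less_iff[OF x(1) undigits_in_inner_points]
      by (simp add: coeffs_def digits_undigits undigits_in_inner_points)
  qed (simp add: coeffs_def)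
  then show "lead_less (coeffs k F) (coeffs k G)"
    using x(1,2) unfolding lead_less_def by (intro exI[of _ "digits k x"]) (simp add: coeffs_def undigits_digits)
next
  assume "lead_less (coeffs k F) (coeffs k G)"
  then obtain xs where xs: "coeffs k F xs < coeffs k G xs" "\<forall>ys. xs < ys \<longrightarrow> coeffs k F ys = coeffs k G ys"
    unfolding lead_less_def by blast
  then have len: "length xs = k" by (auto simp: coeffs_def split: if_splits)
  have "F y = G y" if "y \<in> inner_points k" "(undigits k xs, y) \<in> omega_exp (fin_ord k) \<and> y \<noteq> undigits k xs" for y
    using xs(2)[rule_format, of "digits k y"] that omega_exp_fin_ord_less_iff[OF undigits_in_inner_points]
    by (simp add: coeffs_def undigits_digits digits_undigits[OF len])
  then show "\<exists>x\<in>inner_points k. F x < G x \<and>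
      (\<forall>y\<in>inner_points k. (x, y) \<in> omega_exp (fin_ord k) \<and> y \<noteq> x \<longrightarrow> F y = G y)"
    using xs(1) len undigits_in_inner_points by (auto simp: coeffs_def)
qed

text \<open>Membership in omega_exp, stated so that it can be unfolded at the outer level only.\<close>

lemma omega_exp_iff:
  "(f, g) \<in> omega_exp r \<longleftrightarrow> fin_supp (Field r) f \<and> fin_supp (Field r) g \<and>
     (f = g \<or> (\<exists>a\<in>Field r. f a < g a \<and> (\<forall>b\<in>Field r. (a, b) \<in> r \<and> b \<noteq> a \<longrightarrow> f b = g b)))"
  by (simp add: omega_exp_def)

lemma omega_omega_pow_iff:
  "(F, G) \<in> omega_omega_pow k \<longleftrightarrow> fin_supp (inner_points k) F \<and> fin_supp (inner_points k) G \<and>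
     compare_coeffs (coeffs k F) (coeffs k G) \<noteq> Greater"
proof -
  have "(F, G) \<in> omega_omega_pow k \<longleftrightarrow> fin_supp (inner_points k) F \<and> fin_supp (inner_points k) G \<and>
      (F = G \<or> lead_less (coeffs k F) (coeffs k G))"
    unfolding omega_omega_pow_def omega_exp_iff[of F G] Field_omega_exp_fin_ord lead_less_coeffs ..
  moreover have "compare_coeffs (coeffs k F) (coeffs k G) \<noteq> Greater \<longleftrightarrow>
      lead_less (coeffs k F) (coeffs k G) \<or> F = G"
    if "fin_supp (inner_points k) F" "fin_supp (inner_points k) G"
    using that admissible_coeffs[OF that(1)] admissible_coeffs[OF that(2)] coeffs_inj[OF that]
    by (subst compare_coeffs_not_Greater_iff) (auto simp: admissible_def)
  ultimately show ?thesis by blast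
qed

lemma Field_omega_omega_pow: "Field (omega_omega_pow k) = {F. fin_supp (inner_points k) F}"
  unfolding omega_omega_pow_def Field_omega_exp[of "omega_exp (fin_ord k)"] Field_omega_exp_fin_ord ..

definition ordinal_code :: "nat \<Rightarrow> ((nat \<Rightarrow> nat) \<Rightarrow> nat) \<Rightarrow> unit tree" where
  "ordinal_code k F = unit_tree (code (coeffs k F))"

lemma bij_ordinal_code: "bij_betw (ordinal_code k) (Field (omega_omega_pow k)) (lang (code_ta k))"
proof -
  have "bij_betw unit_tree (codes k) (unit_tree ` codes k)"
    using inj_unit_tree by (simp add: bij_betw_imageI inj_on_subset)
  then have "bij_betw (unit_tree \<circ> code \<circ> coeffs k) {F. fin_supp (inner_points k) F} (unit_tree ` codes k)"
    using bij_coeffs bij_code by (blast intro: bij_betw_trans)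
  moreover have "ordinal_code k = unit_tree \<circ> code \<circ> coeffs k" by (simp add: fun_eq_iff ordinal_code_def)
  ultimately show ?thesis by (simp add: Field_omega_omega_pow lang_code_ta)
qed

lemma lang_pair_ta_ordinal_code:
  "lang (pair_ta k) = {conv (ordinal_code k F) (ordinal_code k G) | F G. (F, G) \<in> omega_omega_pow k}"
proof -
  have "(\<exists>H\<^sub>1 H\<^sub>2. s = conv (unit_tree (code H\<^sub>1)) (unit_tree (code H\<^sub>2)) \<and>
           admissible k H\<^sub>1 \<and> admissible k H\<^sub>2 \<and> compare_coeffs H\<^sub>1 H\<^sub>2 \<noteq> Greater) \<longleftrightarrow>
        (\<exists>F G. s = conv (ordinal_code k F) (ordinal_code k G) \<and> (F, G) \<in> omega_omega_pow k)" for s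
    unfolding omega_omega_pow_iff ordinal_code_def using admissible_coeffs coeffs_surj by metis
  then show ?thesis unfolding lang_pair_ta by blast
qed

theorem lemma3p13:
  fixes k :: nat
  shows "\<exists>(A :: (unit, nat) ta) (Ale :: (unit option \<times> unit option, nat) ta)
            (\<mu> :: ((nat \<Rightarrow> nat) \<Rightarrow> nat) \<Rightarrow> unit tree).
           tree_automatic_presentation (omega_omega_pow k) A Ale \<mu>"
proof -
  obtain A :: "(unit, nat) ta" where "wf_ta A" "lang A = lang (code_ta k)"
    using nat_states_ta[OF wf_code_ta] by blast
  moreover obtain Ale :: "(unit option \<times> unit option, nat) ta"
    where "wf_ta Ale" "lang Ale = lang (pair_ta k)"
    using nat_states_ta[OF wf_pair_ta] by blast
  ultimately have "tree_automatic_presentation (omega_omega_pow k) A Ale (ordinal_code k)"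
    unfolding tree_automatic_presentation_def
    using bij_ordinal_code lang_pair_ta_ordinal_code by simp
  then show ?thesis by blast
qed

end
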